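(* Let $p\colon G(J)\to D'(K)$ be a realizable puzzle. Suppose an edge of $G(J)$ colored $v$, with endpoints $\boldsymbol\alpha,\boldsymbol\alpha'$ where $\alpha_v=a$, $\alpha'_v=b$ ($a\ne b$) and $\alpha_i=\alpha'_i$ for $i\ne v$, is trivial, i.e. $p(\boldsymbol\alpha)=p(\boldsymbol\alpha')$. Then every edge parallel to it is trivial: for every $\boldsymbol\beta\in I(J)$ with $\beta_v=a$, letting $\boldsymbol\beta'$ be obtained from $\boldsymbol\beta$ by replacing the $v$-th coordinate by $b$, we have $p(\boldsymbol\beta)=p(\boldsymbol\beta')$.
   Context: Let $R\in\{\mathbb Z,\mathbb Z_2\}$; an $R$-basis of $R^n$ is a $\mathbb Z$-basis of $\mathbb Z^n$ ($R=\mathbb Z$) or a basis of $\mathbb Z_2^n$ ($R=\mathbb Z_2$). $K$ is an $(n-1)$-dimensional star-shaped simplicial sphere on $[m]$. An $R$-characteristic map over a complex with $(N-1)$-dimensional facets is a map from its vertices to $R^N$ sending each $(N-1)$-face to an $R$-basis; D-J equivalence is equality up to left multiplication by $GL_N(R)$. For a face $\sigma$, $\operatorname{proj}_\sigma\lambda$ is the characteristic map on $\operatorname{link}\sigma$ given by $w\mapsto[\lambda(w)]\in R^N/\langle\lambda(u):u\in\sigma\rangle$. For $J=(j_1,\dots,j_m)\in\mathbb Z_{>0}^m$, $K(J)$ is the complex on vertices $\{i_k:1\le i\le m,1\le k\le j_i\}$ whose minimal non-faces are $\bigcup_{i\in\tau}\{i_1,\dots,i_{j_i}\}$ for $\tau$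 a minimal non-face of $K$; $\operatorname{wed}_vK=K(J)$ with $j_v=2$, other $j_i=1$. $I(J)=\{\boldsymbol\alpha:1\le\alpha_i\le j_i\}$; $\sigma(\boldsymbol\alpha)$ is the set of all vertices of $K(J)$ except $1_{\alpha_1},\dots,m_{\alpha_m}$, a face whose link is identified with $K$ via $i_{\alpha_i}\mapsto i$. The pre-diagram $D'(K)$: vertices are D-J classes of $R$-characteristic maps over $K$; an edge colored $v$ joins $\lambda_1,\lambda_2$ iff some $R$-characteristic map $\Lambda$ over $\operatorname{wed}_vK$ has $\operatorname{proj}_{v_1}\Lambda=\lambda_1$, $\operatorname{proj}_{v_2}\Lambda=\lambda_2$ (links of $v_1,v_2$ identified with $K$ by sending the other of $v_1,v_2$ to $v$). $G(J)$ is the $1$-skeleton of $\prod_i\Delta^{j_i-1}$ with vertex set $I(J)$, edges joining vertices differing in exactly one coordinate $v$, colored $v$. A puzzle is a color-preserving graph homomorphism $G(J)\to D'(K)$; it is realizable if it equals $\boldsymbol\alpha\mapsto\operatorname{proj}_{\sigma(\boldsymbol\alpha)}\Lambda$ for some $R$-characteristic map $\Lambda$ over $K(J)$. *)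

theory Defs
  imports "HOL-Analysis.Analysis"
begin

definition ring_Z_or_Z2 :: "'r::comm_ring_1 itself \<Rightarrow> bool" where
  "ring_Z_or_Z2 _ \<longleftrightarrow> bij (of_int :: int \<Rightarrow> 'r) \<or> CARD('r) = 2"

(* vectors of R^N are functions nat => R; only coordinates 0..<N are relevant *)
definition lincomb :: "'v set \<Rightarrow> ('v \<Rightarrow> 'r::comm_ring_1) \<Rightarrow> ('v \<Rightarrow> nat \<Rightarrow> 'r) \<Rightarrow> nat \<Rightarrow> 'r" where
  "lincomb S c f = (\<lambda>k. \<Sum>v\<in>S. c v * f v k)"

definition is_R_basis :: "nat \<Rightarrow> 'v set \<Rightarrow> ('v \<Rightarrow> nat \<Rightarrow> 'r::comm_ring_1) \<Rightarrow> bool" where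
  "is_R_basis N S f \<longleftrightarrow>
     (\<forall>c. (\<forall>k<N. lincomb S c f k = 0) \<longrightarrow> (\<forall>v\<in>S. c v = 0)) \<and>
     (\<forall>y. \<exists>c. \<forall>k<N. lincomb S c f k = y k)"

definition char_map :: "nat \<Rightarrow> 'v set set \<Rightarrow> ('v \<Rightarrow> nat \<Rightarrow> 'r::comm_ring_1) \<Rightarrow> bool" where
  "char_map N L f \<longleftrightarrow> (\<forall>\<sigma>\<in>L. card \<sigma> = N \<longrightarrow> is_R_basis N \<sigma> f)"

definition matvec :: "nat \<Rightarrow> (nat \<Rightarrow> nat \<Rightarrow> 'r::comm_ring_1) \<Rightarrow> (nat \<Rightarrow> 'r) \<Rightarrow> nat \<Rightarrow> 'r" where
  "matvec N A x = (\<lambda>k. \<Sum>l<N. A k l * x l)"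

definition DJ_equiv :: "nat \<Rightarrow> 'v set \<Rightarrow> ('v \<Rightarrow> nat \<Rightarrow> 'r::comm_ring_1) \<Rightarrow> ('v \<Rightarrow> nat \<Rightarrow> 'r) \<Rightarrow> bool" where
  "DJ_equiv N V f g \<longleftrightarrow>
     (\<exists>A B. (\<forall>k<N. \<forall>l<N. (\<Sum>i<N. A k i * B i l) = (if k = l then 1 else 0)) \<and>
            (\<forall>k<N. \<forall>l<N. (\<Sum>i<N. B k i * A i l) = (if k = l then 1 else 0)) \<and>
            (\<forall>v\<in>V. \<forall>k<N. g v k = matvec N A (f v) k))"

(* mu (a map on vertex set V, valued in R^N') is D-J equivalent to proj_sigma Lam,
   where the link of sigma is identified with V via psi : V -> link sigma.
   The quotient R^N / <Lam u : u in sigma> is identified with R^N' by a surjective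
   R-linear map P : R^N -> R^N' whose kernel is exactly that span. *)
definition proj_rep :: "nat \<Rightarrow> ('w \<Rightarrow> nat \<Rightarrow> 'r::comm_ring_1) \<Rightarrow> 'w set \<Rightarrow> nat \<Rightarrow> ('v \<Rightarrow> 'w) \<Rightarrow> 'v set
     \<Rightarrow> ('v \<Rightarrow> nat \<Rightarrow> 'r) \<Rightarrow> bool" where
  "proj_rep N Lam \<sigma> N' \<psi> V \<mu> \<longleftrightarrow>
     (\<exists>P. (\<forall>y. \<exists>x. \<forall>k<N'. matvec N P x k = y k) \<and>
          (\<forall>x. (\<forall>k<N'. matvec N P x k = 0) \<longleftrightarrow> (\<exists>c. \<forall>l<N. x l = (\<Sum>u\<in>\<sigma>. c u * Lam u l))) \<and>
          (\<forall>i\<in>V. \<forall>k<N'. \<mu> i k = matvec N P (Lam (\<psi> i)) k))"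

definition simplicial_complex_on :: "nat \<Rightarrow> nat set set \<Rightarrow> bool" where
  "simplicial_complex_on m K \<longleftrightarrow> K \<subseteq> Pow {1..m} \<and> (\<forall>\<sigma>\<in>K. \<forall>\<tau>. \<tau> \<subseteq> \<sigma> \<longrightarrow> \<tau> \<in> K)
      \<and> (\<forall>i\<in>{1..m}. {i} \<in> K)"

definition geom_realization :: "nat set set \<Rightarrow> (nat \<Rightarrow> 'a::euclidean_space) \<Rightarrow> bool" where
  "geom_realization K pos \<longleftrightarrow>
     (\<forall>\<sigma>\<in>K. inj_on pos \<sigma> \<and> \<not> affine_dependent (pos ` \<sigma>)) \<and>
     (\<forall>\<sigma>\<in>K. \<forall>\<tau>\<in>K. convex hull (pos ` \<sigma>) \<inter> convex hull (pos ` \<tau>) = convex hull (pos ` (\<sigma> \<inter> \<tau>)))"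

definition polyhedron :: "nat set set \<Rightarrow> (nat \<Rightarrow> 'a::euclidean_space) \<Rightarrow> 'a set" where
  "polyhedron K pos = (\<Union>\<sigma>\<in>K. convex hull (pos ` \<sigma>))"

(* (n-1)-dimensional star-shaped simplicial sphere on [m], realized in a Euclidean
   space 'a of dimension n: every ray from some point x0 meets |K| exactly once *)
definition star_shaped_sphere :: "'a::euclidean_space itself \<Rightarrow> nat \<Rightarrow> nat \<Rightarrow> nat set set \<Rightarrow> bool" where
  "star_shaped_sphere _ n m K \<longleftrightarrow>
     simplicial_complex_on m K \<and> (\<forall>\<sigma>\<in>K. card \<sigma> \<le> n) \<and> (\<exists>\<sigma>\<in>K. card \<sigma> = n) \<and>
     DIM('a) = n \<and>
     (\<exists>pos :: nat \<Rightarrow> 'a. geom_realization K pos \<and>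
        (\<exists>x0. \<forall>u. u \<noteq> 0 \<longrightarrow> (\<exists>!t::real. t \<ge> 0 \<and> x0 + t *\<^sub>R u \<in> polyhedron K pos)))"

(* vertex i_k of K(J) is the pair (i,k) *)
definition blk :: "(nat \<Rightarrow> nat) \<Rightarrow> nat \<Rightarrow> (nat \<times> nat) set" where
  "blk J i = {(i, k) | k. 1 \<le> k \<and> k \<le> J i}"

definition VJ :: "nat \<Rightarrow> (nat \<Rightarrow> nat) \<Rightarrow> (nat \<times> nat) set" where
  "VJ m J = (\<Union>i\<in>{1..m}. blk J i)"

definition min_nonface :: "nat \<Rightarrow> nat set set \<Rightarrow> nat set \<Rightarrow> bool" where
  "min_nonface m K \<tau> \<longleftrightarrow> \<tau> \<subseteq> {1..m} \<and> \<tau> \<notin> K \<and> (\<forall>\<rho>. \<rho> \<subset> \<tau> \<longrightarrow> \<rho> \<in> K)"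

definition KJ :: "nat \<Rightarrow> nat set set \<Rightarrow> (nat \<Rightarrow> nat) \<Rightarrow> (nat \<times> nat) set set" where
  "KJ m K J = {S. S \<subseteq> VJ m J \<and> \<not> (\<exists>\<tau>. min_nonface m K \<tau> \<and> (\<Union>i\<in>\<tau>. blk J i) \<subseteq> S)}"

definition wedJ :: "nat \<Rightarrow> nat \<Rightarrow> nat" where
  "wedJ v = (\<lambda>i. if i = v then 2 else 1)"

(* dimension N of characteristic maps over K(J) *)
definition NJ :: "nat \<Rightarrow> nat \<Rightarrow> (nat \<Rightarrow> nat) \<Rightarrow> nat" where
  "NJ n m J = n + (\<Sum>i\<in>{1..m}. J i - 1)"

definition IJ :: "nat \<Rightarrow> (nat \<Rightarrow> nat) \<Rightarrow> (nat \<Rightarrow> nat) set" where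
  "IJ m J = {\<alpha>. (\<forall>i\<in>{1..m}. 1 \<le> \<alpha> i \<and> \<alpha> i \<le> J i) \<and> (\<forall>i. i \<notin> {1..m} \<longrightarrow> \<alpha> i = 0)}"

definition sigmaJ :: "nat \<Rightarrow> (nat \<Rightarrow> nat) \<Rightarrow> (nat \<Rightarrow> nat) \<Rightarrow> (nat \<times> nat) set" where
  "sigmaJ m J \<alpha> = VJ m J - {(i, \<alpha> i) | i. i \<in> {1..m}}"

definition Dedge :: "nat \<Rightarrow> nat \<Rightarrow> nat set set \<Rightarrow> nat \<Rightarrow> (nat \<Rightarrow> nat \<Rightarrow> 'r::comm_ring_1)
     \<Rightarrow> (nat \<Rightarrow> nat \<Rightarrow> 'r) \<Rightarrow> bool" where
  "Dedge n m K v f1 f2 \<longleftrightarrow>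
     (\<exists>Lam :: nat \<times> nat \<Rightarrow> nat \<Rightarrow> 'r. char_map (n + 1) (KJ m K (wedJ v)) Lam \<and>
        proj_rep (n + 1) Lam {(v, 1)} n (\<lambda>i. if i = v then (v, 2) else (i, 1)) {1..m} f1 \<and>
        proj_rep (n + 1) Lam {(v, 2)} n (\<lambda>i. (i, 1)) {1..m} f2)"

(* a puzzle G(J) -> D'(K), given by representatives p alpha of D-J classes *)
definition puzzle :: "nat \<Rightarrow> nat \<Rightarrow> nat set set \<Rightarrow> (nat \<Rightarrow> nat) \<Rightarrow> ((nat \<Rightarrow> nat) \<Rightarrow> nat \<Rightarrow> nat \<Rightarrow> 'r::comm_ring_1) \<Rightarrow> bool" where
  "puzzle n m K J p \<longleftrightarrow>
     (\<forall>\<alpha>\<in>IJ m J. char_map n K (p \<alpha>)) \<and>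
     (\<forall>\<alpha>\<in>IJ m J. \<forall>v\<in>{1..m}. \<forall>c. 1 \<le> c \<and> c \<le> J v \<and> c \<noteq> \<alpha> v \<longrightarrow>
         Dedge n m K v (p \<alpha>) (p (\<alpha>(v := c))))"

definition realizable_puzzle :: "nat \<Rightarrow> nat \<Rightarrow> nat set set \<Rightarrow> (nat \<Rightarrow> nat) \<Rightarrow> ((nat \<Rightarrow> nat) \<Rightarrow> nat \<Rightarrow> nat \<Rightarrow> 'r::comm_ring_1) \<Rightarrow> bool" where
  "realizable_puzzle n m K J p \<longleftrightarrow> puzzle n m K J p \<and>
     (\<exists>Lam :: nat \<times> nat \<Rightarrow> nat \<Rightarrow> 'r. char_map (NJ n m J) (KJ m K J) Lam \<and>
        (\<forall>\<alpha>\<in>IJ m J. proj_rep (NJ n m J) Lam (sigmaJ m J \<alpha>) n (\<lambda>i. (i, \<alpha> i)) {1..m} (p \<alpha>)))"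

end

theory Submission
  imports Defs
begin

text \<open>
  Let \<open>\<Lambda>\<close> realize the puzzle and write \<open>v\<^sub>a, v\<^sub>b\<close> for the vertices \<open>(v, a), (v, b)\<close> of \<open>K(J)\<close>.
  If \<open>p(\<alpha>') = A p(\<alpha>)\<close> with \<open>A \<in> GL\<^sub>n(R)\<close> and \<open>P, P'\<close> are the projections defining \<open>p(\<alpha>), p(\<alpha>')\<close>,
  then \<open>P' - A P\<close> kills \<open>\<Lambda>(u)\<close> for every vertex \<open>u \<noteq> v\<^sub>a, v\<^sub>b\<close> and sends \<open>\<Lambda>(v\<^sub>b) \<mapsto> p(\<alpha>')(v)\<close>,
  \<open>\<Lambda>(v\<^sub>a) \<mapsto> -p(\<alpha>')(v)\<close>. Since \<open>v\<close> lies in a facet of the (pure) sphere \<open>K\<close>, \<open>p(\<alpha>')(v)\<close> is a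
  basis vector, and reading off its coordinate yields a linear form \<open>\<Psi>\<close> on \<open>R\<^sup>N\<close> with
  \<open>\<Psi>(\<Lambda>(v\<^sub>a)) = -1\<close>, \<open>\<Psi>(\<Lambda>(v\<^sub>b)) = 1\<close> and \<open>\<Psi> = 0\<close> on all other \<open>\<Lambda>(u)\<close>.
  The transvection \<open>x \<mapsto> x + \<Psi>(x)(\<Lambda>(v\<^sub>a) - \<Lambda>(v\<^sub>b))\<close> is then an involution of \<open>R\<^sup>N\<close> which,
  for every \<open>\<beta>\<close> with \<open>\<beta>\<^sub>v = a\<close>, carries \<open>\<Lambda>(i, \<beta>\<^sub>i)\<close> to \<open>\<Lambda>(i, \<beta>'\<^sub>i)\<close> and the span of \<open>\<sigma>(\<beta>)\<close> onto that
  of \<open>\<sigma>(\<beta>')\<close>; so the two projections have the same kernel and differ by an element of \<open>GL\<^sub>n(R)\<close>.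

  Purity of \<open>K\<close> comes from the star-shaped realization: if every simplex containing \<open>v\<close> had fewer
  than \<open>n\<close> vertices, radial projection from the centre would cover a neighbourhood of \<open>v\<close> by finitely
  many affine subspaces of positive codimension.
\<close>

definition linear_map :: "((nat \<Rightarrow> 'r::comm_ring_1) \<Rightarrow> nat \<Rightarrow> 'r) \<Rightarrow> bool" where
  "linear_map f \<longleftrightarrow>
     (\<forall>x y. f (\<lambda>l. x l + y l) = (\<lambda>k. f x k + f y k)) \<and> (\<forall>c x. f (\<lambda>l. c * x l) = (\<lambda>k. c * f x k))"

definition linear_form :: "nat \<Rightarrow> ((nat \<Rightarrow> 'r::comm_ring_1) \<Rightarrow> 'r) \<Rightarrow> bool" where
  "linear_form N f \<longleftrightarrow>
     (\<forall>x y. f (\<lambda>l. x l + y l) = f x + f y) \<and> (\<forall>c x. f (\<lambda>l. c * x l) = c * f x) \<and>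
     (\<forall>x x'. (\<forall>l<N. x l = x' l) \<longrightarrow> f x = f x')"

definition in_span :: "nat \<Rightarrow> ('w \<Rightarrow> nat \<Rightarrow> 'r::comm_ring_1) \<Rightarrow> 'w set \<Rightarrow> (nat \<Rightarrow> 'r) \<Rightarrow> bool" where
  "in_span N Lam S x \<longleftrightarrow> (\<exists>c. \<forall>l<N. x l = (\<Sum>u\<in>S. c u * Lam u l))"

lemma linear_map_add: "linear_map f \<Longrightarrow> f (\<lambda>l. x l + y l) = (\<lambda>k. f x k + f y k)"
  and linear_map_scale: "linear_map f \<Longrightarrow> f (\<lambda>l. c * x l) = (\<lambda>k. c * f x k)"
  unfolding linear_map_def by blast+

lemma linear_map_diff:
  assumes "linear_map f"
  shows "f (\<lambda>l. x l - y l) = (\<lambda>k. f x k - f y k)"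
  using linear_map_add[OF assms, of x "\<lambda>l. (-1) * y l"] linear_map_scale[OF assms, of "-1" y]
  by simp

lemma linear_map_sum:
  assumes f: "linear_map f" and "finite S"
  shows "f (\<lambda>l. \<Sum>i\<in>S. c i * xs i l) = (\<lambda>k. \<Sum>i\<in>S. c i * f (xs i) k)"
  using \<open>finite S\<close>
proof (induction S rule: finite_induct)
  case empty
  then show ?case using linear_map_scale[OF f, of 0 "\<lambda>l. 0"] by simp
next
  case (insert a S)
  then show ?case
    using linear_map_add[OF f, of "\<lambda>l. c a * xs a l"] by (simp add: linear_map_scale[OF f])
qed

lemma linear_map_comp: "linear_map f \<Longrightarrow> linear_map g \<Longrightarrow> linear_map (\<lambda>x. f (g x))"
  unfolding linear_map_def by simp

lemma linear_map_matvec: "linear_map (matvec N P)"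
  unfolding linear_map_def matvec_def
  by (auto simp: sum.distrib sum_distrib_left algebra_simps intro!: ext)

lemma matvec_cong: "(\<forall>l<N. x l = x' l) \<Longrightarrow> matvec N P x = matvec N P x'"
  unfolding matvec_def by (auto intro!: ext sum.cong)

lemma linear_form_add: "linear_form N f \<Longrightarrow> f (\<lambda>l. x l + y l) = f x + f y"
  and linear_form_scale: "linear_form N f \<Longrightarrow> f (\<lambda>l. c * x l) = c * f x"
  and linear_form_cong: "linear_form N f \<Longrightarrow> (\<forall>l<N. x l = x' l) \<Longrightarrow> f x = f x'"
  unfolding linear_form_def by blast+

lemma linear_form_zero: "linear_form N f \<Longrightarrow> f (\<lambda>l. 0) = 0"
  using linear_form_scale[of N f 0 "\<lambda>l. 0"] by simp

lemma linear_form_neg: "linear_form N f \<Longrightarrow> f (\<lambda>l. - x l) = - f x"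
  using linear_form_scale[of N f "-1" x] by simp

lemma linear_form_diff: "linear_form N f \<Longrightarrow> f (\<lambda>l. x l - y l) = f x - f y"
  using linear_form_add[of N f x "\<lambda>l. - y l"] linear_form_neg[of N f y] by simp

lemma linear_form_sum:
  assumes f: "linear_form N f" and "finite S"
  shows "f (\<lambda>l. \<Sum>i\<in>S. c i * xs i l) = (\<Sum>i\<in>S. c i * f (xs i))"
  using \<open>finite S\<close>
proof (induction S rule: finite_induct)
  case empty
  then show ?case using linear_form_zero[OF f] by simp
next
  case (insert a S)
  then show ?case
    using linear_form_add[OF f, of "\<lambda>l. c a * xs a l"] by (simp add: linear_form_scale[OF f])
qed

lemma linear_form_uminus: "linear_form N f \<Longrightarrow> linear_form N (\<lambda>x. - f x)"
  and linear_form_minus: "linear_form N f \<Longrightarrow> linear_form N g \<Longrightarrow> linear_form N (\<lambda>x. f x - g x)"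
  unfolding linear_form_def by (simp_all add: algebra_simps) metis

lemma linear_form_matvec:
  assumes "linear_form n f"
  shows "linear_form N (\<lambda>x. f (matvec N P x))"
  unfolding linear_form_def
  by (simp add: linear_map_add[OF linear_map_matvec] linear_map_scale[OF linear_map_matvec]
      linear_form_add[OF assms] linear_form_scale[OF assms]) (metis matvec_cong)

lemma linear_map_coordinate_expansion:
  fixes f g :: "(nat \<Rightarrow> 'r::comm_ring_1) \<Rightarrow> nat \<Rightarrow> 'r"
  assumes f: "linear_map f" and g: "linear_map g"
    and ker: "\<And>x. (\<forall>k<n. f x k = 0) \<Longrightarrow> (\<forall>k<n. g x k = 0)"
    and e: "\<And>k j. k < n \<Longrightarrow> j < n \<Longrightarrow> f (e k) j = (if j = k then 1 else 0)"
    and "j < n"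
  shows "g x j = (\<Sum>k<n. g (e k) j * f x k)"
proof -
  define z where "z = (\<lambda>l. x l - (\<Sum>k<n. f x k * e k l))"
  have "f z i = 0" if "i < n" for i
  proof -
    have "(\<Sum>k<n. f x k * f (e k) i) = (\<Sum>k<n. if k = i then f x k else 0)"
      using that by (intro sum.cong) (auto simp: e)
    then show ?thesis using that
      by (simp add: z_def linear_map_diff[OF f] linear_map_sum[OF f])
  qed
  then have "g z j = 0" using ker \<open>j < n\<close> by blast
  moreover have "g z j = g x j - (\<Sum>k<n. f x k * g (e k) j)"
    by (simp add: z_def linear_map_diff[OF g] linear_map_sum[OF g])
  ultimately show ?thesis by (simp add: mult.commute)
qed

lemma surjective_unit_preimages:
  assumes "\<forall>y. \<exists>x. \<forall>k<n. f x k = y k"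
  shows "\<exists>e. \<forall>k. \<forall>j<n. f (e k) j = (if j = k then 1 else 0)"
proof -
  have "\<exists>x. \<forall>j<n. f x j = (if j = k then 1 else 0)" for k
    using assms[rule_format, of "\<lambda>j. if j = k then 1 else 0"] .
  then show ?thesis by (rule choice[OF allI])
qed

lemma surjective_same_kernel_DJ:
  fixes f g :: "(nat \<Rightarrow> 'r::comm_ring_1) \<Rightarrow> nat \<Rightarrow> 'r"
  assumes f: "linear_map f" and g: "linear_map g"
    and surj_f: "\<forall>y. \<exists>x. \<forall>k<n. f x k = y k" and surj_g: "\<forall>y. \<exists>x. \<forall>k<n. g x k = y k"
    and ker: "\<And>x. (\<forall>k<n. f x k = 0) \<longleftrightarrow> (\<forall>k<n. g x k = 0)"
  shows "\<exists>A B. (\<forall>k<n. \<forall>l<n. (\<Sum>i<n. A k i * B i l) = (if k = l then 1 else 0)) \<and>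
            (\<forall>k<n. \<forall>l<n. (\<Sum>i<n. B k i * A i l) = (if k = l then 1 else 0)) \<and>
            (\<forall>x. \<forall>k<n. g x k = matvec n A (f x) k)"
proof -
  obtain e where e: "\<forall>k. \<forall>j<n. f (e k) j = (if j = k then 1 else 0)"
    using surjective_unit_preimages[OF surj_f] by blast
  obtain e' where e': "\<forall>k. \<forall>j<n. g (e' k) j = (if j = k then 1 else 0)"
    using surjective_unit_preimages[OF surj_g] by blast
  have g_exp: "\<And>x j. j < n \<Longrightarrow> g x j = (\<Sum>k<n. g (e k) j * f x k)"
    by (rule linear_map_coordinate_expansion[OF f g]) (use ker e in blast)+
  have f_exp: "\<And>x j. j < n \<Longrightarrow> f x j = (\<Sum>k<n. f (e' k) j * g x k)"
    by (rule linear_map_coordinate_expansion[OF g f]) (use ker e' in blast)+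
  show ?thesis
  proof (rule exI[of _ "\<lambda>j k. g (e k) j"], rule exI[of _ "\<lambda>j k. f (e' k) j"], intro conjI allI impI)
    fix k l assume "k < n" "l < n"
    then show "(\<Sum>i<n. g (e i) k * f (e' l) i) = (if k = l then 1 else 0)"
      using g_exp[of k "e' l"] e' by simp
  next
    fix k l assume "k < n" "l < n"
    then show "(\<Sum>i<n. f (e' i) k * g (e l) i) = (if k = l then 1 else 0)"
      using f_exp[of k "e l"] e by simp
  next
    fix x k assume "k < n"
    then show "g x k = matvec n (\<lambda>j k. g (e k) j) (f x) k"
      unfolding matvec_def using g_exp[of k x] by (simp add: mult.commute)
  qed
qed

lemma is_R_basis_coeffs_unique:
  assumes "is_R_basis n F \<mu>" and "\<forall>k<n. lincomb F c \<mu> k = lincomb F d \<mu> k"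
  shows "\<forall>u\<in>F. c u = d u"
proof -
  have "\<forall>k<n. lincomb F (\<lambda>u. c u - d u) \<mu> k = 0"
    using assms(2) unfolding lincomb_def by (simp add: algebra_simps sum_subtractf)
  then show ?thesis using assms(1) unfolding is_R_basis_def by fastforce
qed

lemma is_R_basis_coordinate_form:
  fixes \<mu> :: "'v \<Rightarrow> nat \<Rightarrow> 'r::comm_ring_1"
  assumes basis: "is_R_basis n F \<mu>" and "finite F" and "v \<in> F"
  shows "\<exists>\<phi>. linear_form n \<phi> \<and> \<phi> (\<mu> v) = 1"
proof -
  define co where "co x = (SOME c. \<forall>k<n. lincomb F c \<mu> k = x k)" for x
  have co: "\<forall>k<n. lincomb F (co x) \<mu> k = x k" for x
  proof -
    have "\<exists>c. \<forall>k<n. lincomb F c \<mu> k = x k"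
      using basis unfolding is_R_basis_def by blast
    then show ?thesis unfolding co_def by (rule someI_ex)
  qed
  have co_eq: "co x v = c v" if "\<forall>k<n. lincomb F c \<mu> k = x k" for x c
    using is_R_basis_coeffs_unique[OF basis] co[of x] that \<open>v \<in> F\<close> by simp
  have "linear_form n (\<lambda>x. co x v)" unfolding linear_form_def
  proof (intro conjI allI impI)
    fix x y
    show "co (\<lambda>l. x l + y l) v = co x v + co y v"
      using co[of x] co[of y] by (intro co_eq) (simp add: lincomb_def algebra_simps sum.distrib)
  next
    fix c x
    show "co (\<lambda>l. c * x l) v = c * co x v"
      using co[of x] by (intro co_eq) (simp add: lincomb_def mult.assoc flip: sum_distrib_left)
  next
    fix x x' :: "nat \<Rightarrow> 'r"
    assume "\<forall>l<n. x l = x' l"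
    then show "co x v = co x' v" using co_eq[where x = x' and c = "co x"] co[of x] by simp
  qed
  moreover have "co (\<mu> v) v = 1"
    using co_eq[of "\<lambda>u. if u = v then 1 else 0" "\<mu> v"] \<open>finite F\<close> \<open>v \<in> F\<close>
    by (simp add: lincomb_def sum.remove)
  ultimately show ?thesis by blast
qed

lemma in_span_generator:
  assumes "finite S" "u \<in> S"
  shows "in_span N Lam S (Lam u)"
  unfolding in_span_def
  by (rule exI[of _ "\<lambda>w. if w = u then 1 else 0"]) (simp add: sum.remove[OF assms])

definition transvection ::
    "((nat \<Rightarrow> 'r) \<Rightarrow> 'r) \<Rightarrow> (nat \<Rightarrow> 'r::comm_ring_1) \<Rightarrow> (nat \<Rightarrow> 'r) \<Rightarrow> nat \<Rightarrow> 'r" where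
  "transvection \<Psi> d x = (\<lambda>l. x l + \<Psi> x * d l)"

lemma linear_map_transvection: "linear_form N \<Psi> \<Longrightarrow> linear_map (transvection \<Psi> d)"
  unfolding linear_map_def transvection_def
  by (simp add: linear_form_add linear_form_scale algebra_simps)

lemma transvection_involutive:
  assumes "linear_form N \<Psi>" and "\<Psi> d = -2"
  shows "transvection \<Psi> d (transvection \<Psi> d x) = x"
proof -
  have "\<Psi> (transvection \<Psi> d x) = - \<Psi> x"
    using assms linear_form_add[OF assms(1), of x] linear_form_scale[OF assms(1), of "\<Psi> x" d]
    unfolding transvection_def by simp
  then show ?thesis unfolding transvection_def[of _ _ "transvection \<Psi> d x"]
    by (simp add: transvection_def algebra_simps)
qed

lemma transvection_uminus:
  "transvection (\<lambda>x. - \<Psi> x) (\<lambda>l. d' l - d l) = transvection \<Psi> (\<lambda>l. d l - d' l)"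
  unfolding transvection_def by (simp add: algebra_simps)

lemma in_span_transvection_exchange:
  fixes Lam :: "'w \<Rightarrow> nat \<Rightarrow> 'r::comm_ring_1"
  assumes "finite S" "t \<in> S" "s \<notin> S" and \<Psi>: "linear_form N \<Psi>"
    and "\<Psi> (Lam s) = -1" "\<Psi> (Lam t) = 1" "\<forall>u\<in>S - {t}. \<Psi> (Lam u) = 0"
    and "in_span N Lam S x"
  shows "in_span N Lam (insert s (S - {t})) (transvection \<Psi> (\<lambda>l. Lam s l - Lam t l) x)"
proof -
  obtain c where c: "\<forall>l<N. x l = (\<Sum>u\<in>S. c u * Lam u l)"
    using assms(8) unfolding in_span_def by blast
  have "\<Psi> x = (\<Sum>u\<in>S. c u * \<Psi> (Lam u))"
    using linear_form_cong[OF \<Psi> c] linear_form_sum[OF \<Psi> \<open>finite S\<close>] by simp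
  also have "\<dots> = c t"
    using assms(1,2,6,7) by (simp add: sum.remove)
  finally have \<Psi>x: "\<Psi> x = c t" .
  show ?thesis unfolding in_span_def
  proof (intro exI[of _ "c(s := c t)"] allI impI)
    fix l assume "l < N"
    have "(\<Sum>u\<in>S - {t}. (c(s := c t)) u * Lam u l) = (\<Sum>u\<in>S - {t}. c u * Lam u l)"
      using \<open>s \<notin> S\<close> by (intro sum.cong) auto
    then show "transvection \<Psi> (\<lambda>l. Lam s l - Lam t l) x l =
        (\<Sum>u\<in>insert s (S - {t}). (c(s := c t)) u * Lam u l)"
      using c \<open>l < N\<close> \<Psi>x assms(1,2,3)
      by (simp add: transvection_def sum.remove algebra_simps)
  qed
qed

lemma proj_rep_iff_in_span:
  "proj_rep N Lam \<sigma> n \<psi> V \<mu> \<longleftrightarrow>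
     (\<exists>P. (\<forall>y. \<exists>x. \<forall>k<n. matvec N P x k = y k) \<and>
          (\<forall>x. (\<forall>k<n. matvec N P x k = 0) \<longleftrightarrow> in_span N Lam \<sigma> x) \<and>
          (\<forall>i\<in>V. \<forall>k<n. \<mu> i k = matvec N P (Lam (\<psi> i)) k))"
  unfolding proj_rep_def in_span_def ..

lemma proj_rep_DJ_equiv_by_involution:
  assumes T: "linear_map T" "\<And>x. T (T x) = x"
    and span: "\<And>x. in_span N Lam S x \<longleftrightarrow> in_span N Lam S' (T x)"
    and vertex: "\<And>i. i \<in> V \<Longrightarrow> T (Lam (\<psi> i)) = Lam (\<psi>' i)"
    and rep: "proj_rep N Lam S n \<psi> V \<mu>" and rep': "proj_rep N Lam S' n \<psi>' V \<mu>'"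
  shows "DJ_equiv n V \<mu> \<mu>'"
proof -
  obtain P where surj: "\<forall>y. \<exists>x. \<forall>k<n. matvec N P x k = y k"
    and ker: "\<And>x. (\<forall>k<n. matvec N P x k = 0) \<longleftrightarrow> in_span N Lam S x"
    and \<mu>: "\<forall>i\<in>V. \<forall>k<n. \<mu> i k = matvec N P (Lam (\<psi> i)) k"
    using rep unfolding proj_rep_iff_in_span by blast
  obtain P' where surj': "\<forall>y. \<exists>x. \<forall>k<n. matvec N P' x k = y k"
    and ker': "\<And>x. (\<forall>k<n. matvec N P' x k = 0) \<longleftrightarrow> in_span N Lam S' x"
    and \<mu>': "\<forall>i\<in>V. \<forall>k<n. \<mu>' i k = matvec N P' (Lam (\<psi>' i)) k"
    using rep' unfolding proj_rep_iff_in_span by blast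
  have surj_T: "\<forall>y. \<exists>x. \<forall>k<n. matvec N P' (T x) k = y k"
  proof
    fix y
    obtain x where "\<forall>k<n. matvec N P' x k = y k" using surj' by blast
    then show "\<exists>x. \<forall>k<n. matvec N P' (T x) k = y k" using T(2)[of x] by metis
  qed
  have ker_T: "(\<forall>k<n. matvec N P x k = 0) \<longleftrightarrow> (\<forall>k<n. matvec N P' (T x) k = 0)" for x
    using ker[of x] ker'[of "T x"] span[of x] by simp
  obtain A B where AB: "\<forall>k<n. \<forall>l<n. (\<Sum>i<n. A k i * B i l) = (if k = l then 1 else 0)"
      "\<forall>k<n. \<forall>l<n. (\<Sum>i<n. B k i * A i l) = (if k = l then 1 else 0)"
    and A: "\<forall>x. \<forall>k<n. matvec N P' (T x) k = matvec n A (matvec N P x) k"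
    using surjective_same_kernel_DJ[OF linear_map_matvec linear_map_comp[OF linear_map_matvec T(1)]
        surj surj_T ker_T] by blast
  have "\<mu>' i k = matvec n A (\<mu> i) k" if "i \<in> V" "k < n" for i k
  proof -
    have "\<mu>' i k = matvec N P' (T (Lam (\<psi> i))) k"
      using \<mu>' vertex that by simp
    also have "\<dots> = matvec n A (matvec N P (Lam (\<psi> i))) k"
      using A that by blast
    also have "\<dots> = matvec n A (\<mu> i) k"
      using matvec_cong[of n "matvec N P (Lam (\<psi> i))" "\<mu> i" A] \<mu> that by simp
    finally show ?thesis .
  qed
  then show ?thesis unfolding DJ_equiv_def using AB by blast
qed

lemma mem_VJ_iff: "(i, k) \<in> VJ m J \<longleftrightarrow> i \<in> {1..m} \<and> 1 \<le> k \<and> k \<le> J i"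
  unfolding VJ_def blk_def by auto

lemma mem_sigmaJ_iff: "(i, k) \<in> sigmaJ m J \<alpha> \<longleftrightarrow> (i, k) \<in> VJ m J \<and> k \<noteq> \<alpha> i"
  unfolding sigmaJ_def by (auto simp: mem_VJ_iff)

lemma finite_VJ: "finite (VJ m J)"
proof -
  have "blk J i = Pair i ` {1..J i}" for i
    unfolding blk_def by auto
  then show ?thesis unfolding VJ_def by simp
qed

lemma finite_sigmaJ: "finite (sigmaJ m J \<alpha>)"
  unfolding sigmaJ_def using finite_VJ by simp

lemma proj_matrix_on_vertex:
  assumes ker: "\<forall>x. (\<forall>k<n. matvec N P x k = 0) \<longleftrightarrow> in_span N Lam (sigmaJ m J \<alpha>) x"
    and rep: "\<forall>i\<in>{1..m}. \<forall>k<n. \<mu> i k = matvec N P (Lam (i, \<alpha> i)) k"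
    and "(i, k) \<in> VJ m J" "j < n"
  shows "matvec N P (Lam (i, k)) j = (if k = \<alpha> i then \<mu> i j else 0)"
proof (cases "k = \<alpha> i")
  case True
  have "i \<in> {1..m}" using assms(3) mem_VJ_iff by blast
  then show ?thesis using rep True \<open>j < n\<close> by simp
next
  case False
  then have "in_span N Lam (sigmaJ m J \<alpha>) (Lam (i, k))"
    using assms(3) by (intro in_span_generator finite_sigmaJ) (simp add: mem_sigmaJ_iff)
  then show ?thesis using ker[rule_format, of "Lam (i, k)"] False \<open>j < n\<close> by simp
qed

lemma trivial_edge_separating_form:
  fixes Lam :: "nat \<times> nat \<Rightarrow> nat \<Rightarrow> 'r::comm_ring_1"
  assumes "\<alpha> v = a" "\<alpha>' v = b" "a \<noteq> b" and same: "\<forall>i. i \<noteq> v \<longrightarrow> \<alpha> i = \<alpha>' i"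
    and rep: "proj_rep N Lam (sigmaJ m J \<alpha>) n (\<lambda>i. (i, \<alpha> i)) {1..m} \<mu>"
    and rep': "proj_rep N Lam (sigmaJ m J \<alpha>') n (\<lambda>i. (i, \<alpha>' i)) {1..m} \<mu>'"
    and DJ: "DJ_equiv n {1..m} \<mu> \<mu>'"
    and \<phi>: "linear_form n \<phi>" "\<phi> (\<mu>' v) = 1"
  shows "\<exists>\<Psi>. linear_form N \<Psi> \<and>
     (\<forall>u\<in>VJ m J. \<Psi> (Lam u) = (if u = (v, a) then -1 else if u = (v, b) then 1 else 0))"
proof -
  obtain P where ker: "\<forall>x. (\<forall>k<n. matvec N P x k = 0) \<longleftrightarrow> in_span N Lam (sigmaJ m J \<alpha>) x"
    and \<mu>: "\<forall>i\<in>{1..m}. \<forall>k<n. \<mu> i k = matvec N P (Lam (i, \<alpha> i)) k"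
    using rep unfolding proj_rep_iff_in_span by blast
  obtain P' where ker': "\<forall>x. (\<forall>k<n. matvec N P' x k = 0) \<longleftrightarrow> in_span N Lam (sigmaJ m J \<alpha>') x"
    and \<mu>': "\<forall>i\<in>{1..m}. \<forall>k<n. \<mu>' i k = matvec N P' (Lam (i, \<alpha>' i)) k"
    using rep' unfolding proj_rep_iff_in_span by blast
  obtain A where A: "\<forall>i\<in>{1..m}. \<forall>k<n. \<mu>' i k = matvec n A (\<mu> i) k"
    using DJ unfolding DJ_equiv_def by blast
  define \<Psi> where "\<Psi> x = \<phi> (matvec N P' x) - \<phi> (matvec n A (matvec N P x))" for x
  have "linear_form N \<Psi>"
    unfolding \<Psi>_def
    by (intro linear_form_minus linear_form_matvec[OF \<phi>(1)]
        linear_form_matvec[OF linear_form_matvec[OF \<phi>(1)]])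
  moreover have \<Psi>_vertex: "\<Psi> (Lam (i, k)) =
      (if k = \<alpha>' i then \<phi> (\<mu>' i) else 0) - (if k = \<alpha> i then \<phi> (\<mu>' i) else 0)"
    if ik: "(i, k) \<in> VJ m J" for i k
  proof -
    have i: "i \<in> {1..m}" using ik by (simp add: mem_VJ_iff)
    have "\<phi> (matvec N P' (Lam (i, k))) = \<phi> (if k = \<alpha>' i then \<mu>' i else (\<lambda>j. 0))"
      using proj_matrix_on_vertex[OF ker' \<mu>' ik] by (intro linear_form_cong[OF \<phi>(1)]) simp
    moreover have "\<phi> (matvec n A (matvec N P (Lam (i, k)))) = \<phi> (if k = \<alpha> i then \<mu>' i else (\<lambda>j. 0))"
    proof (intro linear_form_cong[OF \<phi>(1)] allI impI)
      fix j assume "j < n"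
      have "matvec n A (matvec N P (Lam (i, k))) = matvec n A (if k = \<alpha> i then \<mu> i else (\<lambda>j. 0))"
        using proj_matrix_on_vertex[OF ker \<mu> ik] by (intro matvec_cong) simp
      then show "matvec n A (matvec N P (Lam (i, k))) j = (if k = \<alpha> i then \<mu>' i else (\<lambda>j. 0)) j"
        using A i \<open>j < n\<close> by (simp add: matvec_def)
    qed
    ultimately show ?thesis
      unfolding \<Psi>_def by (simp add: linear_form_zero[OF \<phi>(1)])
  qed
  moreover have "\<Psi> (Lam (i, k)) = (if (i, k) = (v, a) then -1 else if (i, k) = (v, b) then 1 else 0)"
    if "(i, k) \<in> VJ m J" for i k
    using \<Psi>_vertex[OF that] assms(1-3) same \<phi>(2) by (cases "i = v") auto
  ultimately show ?thesis by (intro exI[of _ \<Psi>]) force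
qed

lemma parallel_edge_DJ_equiv:
  fixes Lam :: "nat \<times> nat \<Rightarrow> nat \<Rightarrow> 'r::comm_ring_1"
  assumes v: "v \<in> {1..m}" and \<beta>: "\<beta> \<in> IJ m J" "\<beta> v = a" and "a \<noteq> b" and b: "1 \<le> b" "b \<le> J v"
    and \<Psi>: "linear_form N \<Psi>"
    and \<Psi>_Lam: "\<forall>u\<in>VJ m J. \<Psi> (Lam u) = (if u = (v, a) then -1 else if u = (v, b) then 1 else 0)"
    and rep: "proj_rep N Lam (sigmaJ m J \<beta>) n (\<lambda>i. (i, \<beta> i)) {1..m} \<mu>"
    and rep': "proj_rep N Lam (sigmaJ m J (\<beta>(v := b))) n (\<lambda>i. (i, (\<beta>(v := b)) i)) {1..m} \<mu>'"
  shows "DJ_equiv n {1..m} \<mu> \<mu>'"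
proof -
  define S where "S = sigmaJ m J \<beta>"
  define S' where "S' = sigmaJ m J (\<beta>(v := b))"
  define T where "T = transvection \<Psi> (\<lambda>l. Lam (v, a) l - Lam (v, b) l)"
  have fin: "finite S" "finite S'"
    unfolding S_def S'_def by (rule finite_sigmaJ)+
  have va: "(v, a) \<in> VJ m J" and vb: "(v, b) \<in> VJ m J"
    using \<beta> v b by (auto simp: IJ_def mem_VJ_iff)
  then have \<Psi>_a: "\<Psi> (Lam (v, a)) = -1" and \<Psi>_b: "\<Psi> (Lam (v, b)) = 1"
    using \<Psi>_Lam \<open>a \<noteq> b\<close> by auto
  have S: "(v, b) \<in> S" "(v, a) \<notin> S" and S': "(v, a) \<in> S'" "(v, b) \<notin> S'"
    using va vb \<beta>(2) \<open>a \<noteq> b\<close> by (auto simp: S_def S'_def mem_sigmaJ_iff)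
  have S'_eq: "S' = insert (v, a) (S - {(v, b)})" and S_eq: "S = insert (v, b) (S' - {(v, a)})"
    using va vb \<beta>(2) \<open>a \<noteq> b\<close> by (auto simp: S_def S'_def sigmaJ_def mem_VJ_iff)
  have \<Psi>_S: "\<forall>u\<in>S - {(v, b)}. \<Psi> (Lam u) = 0" and \<Psi>_S': "\<forall>u\<in>S' - {(v, a)}. - \<Psi> (Lam u) = 0"
    using \<Psi>_Lam S S' by (auto simp: S_def S'_def sigmaJ_def)
  have T_T: "T (T x) = x" for x
    unfolding T_def using \<Psi>_a \<Psi>_b
    by (intro transvection_involutive[OF \<Psi>]) (simp add: linear_form_diff[OF \<Psi>])
  have fwd: "in_span N Lam S' (T x)" if "in_span N Lam S x" for x
    using in_span_transvection_exchange[OF fin(1) S(1,2) \<Psi> \<Psi>_a \<Psi>_b \<Psi>_S that]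
    unfolding S'_eq T_def .
  have bwd: "in_span N Lam S (T x)" if "in_span N Lam S' x" for x
  proof -
    have "in_span N Lam (insert (v, b) (S' - {(v, a)}))
        (transvection (\<lambda>x. - \<Psi> x) (\<lambda>l. Lam (v, b) l - Lam (v, a) l) x)"
      using \<Psi>_a \<Psi>_b
      by (intro in_span_transvection_exchange[OF fin(2) S'(1,2) linear_form_uminus[OF \<Psi>] _ _ \<Psi>_S' that])
        simp_all
    then show ?thesis unfolding S_eq[symmetric] transvection_uminus T_def .
  qed
  have span: "in_span N Lam S x \<longleftrightarrow> in_span N Lam S' (T x)" for x
    using fwd bwd[of "T x"] T_T by metis
  have vertex: "T (Lam (i, \<beta> i)) = Lam (i, (\<beta>(v := b)) i)" if "i \<in> {1..m}" for i
  proof (cases "i = v")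
    case True
    then show ?thesis using \<Psi>_a \<beta>(2) by (simp add: T_def transvection_def)
  next
    case False
    have "(i, \<beta> i) \<in> VJ m J" using \<beta>(1) that by (simp add: IJ_def mem_VJ_iff)
    then show ?thesis using \<Psi>_Lam False by (simp add: T_def transvection_def)
  qed
  have "linear_map T"
    unfolding T_def by (rule linear_map_transvection[OF \<Psi>])
  from proj_rep_DJ_equiv_by_involution[OF this T_T span vertex rep[folded S_def] rep'[folded S'_def]]
  show ?thesis .
qed

lemma ray_unique_center_notin:
  fixes X :: "'a::real_normed_vector set"
  assumes ray: "\<forall>u. u \<noteq> 0 \<longrightarrow> (\<exists>!t::real. t \<ge> 0 \<and> x0 + t *\<^sub>R u \<in> X)"
    and "q \<in> X" "q \<noteq> x0"
  shows "x0 \<notin> X"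
proof
  assume "x0 \<in> X"
  then have "x0 + 0 *\<^sub>R (q - x0) \<in> X" "x0 + 1 *\<^sub>R (q - x0) \<in> X"
    using \<open>q \<in> X\<close> by simp_all
  moreover have "\<exists>!t::real. t \<ge> 0 \<and> x0 + t *\<^sub>R (q - x0) \<in> X"
    using ray \<open>q \<noteq> x0\<close> by simp
  ultimately show False by (metis order_refl zero_le_one zero_neq_one)
qed

lemma ray_unique_direction_inj:
  fixes X :: "'a::real_normed_vector set"
  assumes ray: "\<forall>u. u \<noteq> 0 \<longrightarrow> (\<exists>!t::real. t \<ge> 0 \<and> x0 + t *\<^sub>R u \<in> X)"
    and "x0 \<notin> X" "q \<in> X" "w \<in> X"
    and dir: "(q - x0) /\<^sub>R norm (q - x0) = (w - x0) /\<^sub>R norm (w - x0)"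
  shows "q = w"
proof -
  have "w - x0 \<noteq> 0" "q - x0 \<noteq> 0" using assms(2-4) by auto
  define t where "t = norm (q - x0) / norm (w - x0)"
  have "q - x0 = norm (q - x0) *\<^sub>R ((q - x0) /\<^sub>R norm (q - x0))"
    using \<open>q - x0 \<noteq> 0\<close> by simp
  then have "q - x0 = norm (q - x0) *\<^sub>R ((w - x0) /\<^sub>R norm (w - x0))"
    by (simp only: dir)
  then have q: "x0 + t *\<^sub>R (w - x0) = q"
    by (simp add: t_def divide_inverse_commute algebra_simps)
  have "x0 + 1 *\<^sub>R (w - x0) \<in> X" "t \<ge> 0"
    using \<open>w \<in> X\<close> by (simp_all add: t_def)
  then have "t = 1"
    using ray \<open>w - x0 \<noteq> 0\<close> q \<open>q \<in> X\<close> by (metis zero_le_one)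
  then show ?thesis using q by simp
qed

lemma ray_unique_local_hit:
  fixes X :: "'a::real_normed_vector set"
  assumes ray: "\<forall>u. u \<noteq> 0 \<longrightarrow> (\<exists>!t::real. t \<ge> 0 \<and> x0 + t *\<^sub>R u \<in> X)"
    and "compact X" "x0 \<notin> X" "w \<in> X" "e > 0"
  shows "\<exists>\<delta>>0. \<forall>z\<in>ball w \<delta>. \<exists>t>0. x0 + t *\<^sub>R (z - x0) \<in> X \<inter> ball w e"
proof -
  define d where "d q = (q - x0) /\<^sub>R norm (q - x0)" for q
  define X' where "X' = X - ball w e"
  have wx0: "w \<noteq> x0" using assms(3,4) by blast
  have "compact X'"
    unfolding X'_def Diff_eq using \<open>compact X\<close> by (intro compact_Int_closed) auto
  moreover have "continuous_on X' d"
    unfolding d_def X'_def using \<open>x0 \<notin> X\<close> by (intro continuous_intros) auto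
  ultimately have "closed (d ` X')"
    by (intro compact_imp_closed compact_continuous_image)
  moreover have "d w \<notin> d ` X'"
    using ray_unique_direction_inj[OF ray \<open>x0 \<notin> X\<close> _ \<open>w \<in> X\<close>] \<open>e > 0\<close>
    unfolding d_def X'_def by fastforce
  ultimately obtain \<eta> where "\<eta> > 0" and \<eta>: "ball (d w) \<eta> \<subseteq> - d ` X'"
    by (metis ComplI open_Compl open_contains_ball)
  have "continuous (at w) d"
    unfolding d_def using wx0 by (intro continuous_intros) auto
  then obtain \<delta> where "\<delta> > 0" and \<delta>: "\<And>z. dist z w < \<delta> \<Longrightarrow> dist (d z) (d w) < \<eta>"
    unfolding continuous_at_eps_delta using \<open>\<eta> > 0\<close> by blast
  have "\<exists>t>0. x0 + t *\<^sub>R (z - x0) \<in> X \<inter> ball w e"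
    if z: "z \<in> ball w (min \<delta> (norm (w - x0)))" for z
  proof -
    have "z \<noteq> x0" using z by (auto simp: dist_norm norm_minus_commute)
    then obtain t where "t \<ge> 0" and q: "x0 + t *\<^sub>R (z - x0) \<in> X"
      using ray by (metis right_minus_eq)
    then have "t > 0" using \<open>x0 \<notin> X\<close> by (cases "t = 0") auto
    then have "d (x0 + t *\<^sub>R (z - x0)) = d z"
      unfolding d_def using \<open>z \<noteq> x0\<close> by simp
    then have "d (x0 + t *\<^sub>R (z - x0)) \<in> ball (d w) \<eta>"
      using \<delta>[of z] z by (simp add: dist_commute)
    then have "x0 + t *\<^sub>R (z - x0) \<notin> X'" using \<eta> by blast
    then show ?thesis using q \<open>t > 0\<close> unfolding X'_def by blast
  qed
  then show ?thesis using \<open>\<delta> > 0\<close> wx0 by (intro exI[of _ "min \<delta> (norm (w - x0))"]) auto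
qed

lemma compact_polyhedron:
  assumes "finite K" "\<forall>\<sigma>\<in>K. finite \<sigma>"
  shows "compact (polyhedron K pos)"
  unfolding polyhedron_def using assms
  by (intro compact_UN) (auto intro!: compact_convex_hull[OF finite_imp_compact])

lemma negligible_affine_hull_insert:
  fixes x :: "'a::euclidean_space"
  assumes "finite S" "card S < DIM('a)"
  shows "negligible (affine hull (insert x S))"
proof -
  have "card (insert x S) \<le> DIM('a)"
    using assms by (simp add: card_insert_if)
  then have "interior (affine hull (insert x S)) = {}"
    using assms(1) by (intro empty_interior_affine_hull) auto
  then show ?thesis by (simp add: negligible_convex_interior convex_affine_hull)
qed

lemma mem_affine_hull_insert_scaled:
  assumes "t \<noteq> 0" "x0 + t *\<^sub>R (z - x0) \<in> affine hull (insert x0 S)"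
  shows "z \<in> affine hull (insert x0 S)"
proof -
  have "z = (1 - 1/t) *\<^sub>R x0 + (1/t) *\<^sub>R (x0 + t *\<^sub>R (z - x0))"
    using assms(1) by (simp add: algebra_simps)
  also have "\<dots> \<in> affine hull (insert x0 S)"
    using assms(2) by (intro mem_affine[OF affine_affine_hull]) (simp_all add: hull_inc)
  finally show ?thesis .
qed

lemma negligible_cones_over_simplices:
  fixes pos :: "nat \<Rightarrow> 'a::euclidean_space"
  assumes "finite K" "\<forall>\<sigma>\<in>K. finite \<sigma> \<and> card \<sigma> < DIM('a)"
  shows "negligible (\<Union>\<sigma>\<in>K. affine hull (insert x0 (pos ` \<sigma>)))"
proof (rule negligible_Union)
  show "finite ((\<lambda>\<sigma>. affine hull (insert x0 (pos ` \<sigma>))) ` K)" using assms(1) by simp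
next
  fix T assume "T \<in> (\<lambda>\<sigma>. affine hull (insert x0 (pos ` \<sigma>))) ` K"
  then obtain \<sigma> where "\<sigma> \<in> K" and T: "T = affine hull (insert x0 (pos ` \<sigma>))" by blast
  then have "card (pos ` \<sigma>) < DIM('a)"
    using card_image_le[of \<sigma> pos] assms(2) by (meson le_less_trans)
  then show "negligible T"
    unfolding T using assms(2) \<open>\<sigma> \<in> K\<close> by (intro negligible_affine_hull_insert) simp_all
qed

lemma geom_realization_near_vertex:
  assumes real: "geom_realization K pos" and "finite K" "\<forall>\<sigma>\<in>K. finite \<sigma>" "{v} \<in> K"
  shows "\<exists>e>0. \<forall>q\<in>polyhedron K pos \<inter> ball (pos v) e. \<exists>\<sigma>\<in>K. v \<in> \<sigma> \<and> q \<in> convex hull (pos ` \<sigma>)"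
proof -
  define Y where "Y = polyhedron {\<sigma>\<in>K. v \<notin> \<sigma>} pos"
  have "closed Y"
    unfolding Y_def using assms(2,3) by (intro compact_imp_closed compact_polyhedron) auto
  moreover have "pos v \<notin> Y"
  proof
    assume "pos v \<in> Y"
    then obtain \<sigma> where "\<sigma> \<in> K" "v \<notin> \<sigma>" "pos v \<in> convex hull (pos ` \<sigma>)"
      unfolding Y_def polyhedron_def by blast
    moreover have "convex hull (pos ` \<sigma>) \<inter> convex hull (pos ` {v}) = convex hull (pos ` (\<sigma> \<inter> {v}))"
      using real \<open>\<sigma> \<in> K\<close> \<open>{v} \<in> K\<close> unfolding geom_realization_def by blast
    ultimately show False by simp
  qed
  ultimately obtain e where "e > 0" and e: "ball (pos v) e \<inter> Y = {}"
    by (metis ComplI open_Compl open_contains_ball disjoint_eq_subset_Compl)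
  have "\<exists>\<sigma>\<in>K. v \<in> \<sigma> \<and> q \<in> convex hull (pos ` \<sigma>)"
    if q: "q \<in> polyhedron K pos" "q \<in> ball (pos v) e" for q
  proof -
    obtain \<sigma> where "\<sigma> \<in> K" "q \<in> convex hull (pos ` \<sigma>)"
      using q(1) unfolding polyhedron_def by blast
    moreover have "q \<notin> Y" using e q(2) by blast
    ultimately show ?thesis unfolding Y_def polyhedron_def by blast
  qed
  with \<open>e > 0\<close> show ?thesis by blast
qed

lemma star_shaped_sphere_vertex_in_facet:
  fixes K :: "nat set set"
  assumes sphere: "star_shaped_sphere TYPE('a::euclidean_space) n m K" and v: "v \<in> {1..m}"
  shows "\<exists>F\<in>K. v \<in> F \<and> card F = n"
proof (rule ccontr)
  assume no_facet: "\<not> ?thesis"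
  have complex: "simplicial_complex_on m K" and dim: "DIM('a) = n"
    and le_n: "\<forall>\<sigma>\<in>K. card \<sigma> \<le> n" and facet: "\<exists>\<sigma>\<in>K. card \<sigma> = n"
    using sphere unfolding star_shaped_sphere_def by blast+
  obtain pos :: "nat \<Rightarrow> 'a" and x0 where real: "geom_realization K pos"
    and ray: "\<forall>u. u \<noteq> 0 \<longrightarrow> (\<exists>!t::real. t \<ge> 0 \<and> x0 + t *\<^sub>R u \<in> polyhedron K pos)"
    using sphere unfolding star_shaped_sphere_def by blast
  have "K \<subseteq> Pow {1..m}" "{v} \<in> K"
    using complex v unfolding simplicial_complex_on_def by blast+
  then have "finite K" and fin: "\<forall>\<sigma>\<in>K. finite \<sigma>"
    by (auto intro: finite_subset)
  have small: "card \<sigma> < n" if "\<sigma> \<in> K" "v \<in> \<sigma>" for \<sigma>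
  proof -
    have "card \<sigma> \<noteq> n" "card \<sigma> \<le> n" using no_facet le_n that by blast+
    then show ?thesis by simp
  qed
  define X where "X = polyhedron K pos"
  have "compact X" unfolding X_def using \<open>finite K\<close> fin by (rule compact_polyhedron)
  have "pos v \<in> X"
    unfolding X_def polyhedron_def using \<open>{v} \<in> K\<close> by (auto intro!: hull_inc)
  have "x0 \<notin> X"
  proof -
    obtain \<sigma> where "\<sigma> \<in> K" "card \<sigma> = n" using facet by blast
    moreover have "n > Suc 0" using small[OF \<open>{v} \<in> K\<close>] by simp
    ultimately obtain i j where "i \<in> \<sigma>" "j \<in> \<sigma>" "i \<noteq> j"
      using card_le_Suc0_iff_eq[of \<sigma>] fin by auto
    moreover have "inj_on pos \<sigma>" using real \<open>\<sigma> \<in> K\<close> unfolding geom_realization_def by blast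
    ultimately have "pos i \<noteq> pos j" by (simp add: inj_on_eq_iff)
    then obtain q where "q \<in> pos ` \<sigma>" "q \<noteq> x0" using \<open>i \<in> \<sigma>\<close> \<open>j \<in> \<sigma>\<close> by blast
    then have "q \<in> X" unfolding X_def polyhedron_def using \<open>\<sigma> \<in> K\<close> by (auto intro: hull_inc)
    from ray_unique_center_notin[OF ray[folded X_def] this \<open>q \<noteq> x0\<close>] show ?thesis .
  qed
  obtain e where "e > 0"
    and near_v: "\<forall>q\<in>X \<inter> ball (pos v) e. \<exists>\<sigma>\<in>K. v \<in> \<sigma> \<and> q \<in> convex hull (pos ` \<sigma>)"
    using geom_realization_near_vertex[OF real \<open>finite K\<close> fin \<open>{v} \<in> K\<close>] unfolding X_def by blast
  obtain \<delta> where "\<delta> > 0"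
    and \<delta>: "\<forall>z\<in>ball (pos v) \<delta>. \<exists>t>0. x0 + t *\<^sub>R (z - x0) \<in> X \<inter> ball (pos v) e"
    using ray_unique_local_hit[OF ray[folded X_def] \<open>compact X\<close> \<open>x0 \<notin> X\<close> \<open>pos v \<in> X\<close> \<open>e > 0\<close>] by blast
  have "ball (pos v) \<delta> \<subseteq> (\<Union>\<sigma>\<in>{\<sigma>\<in>K. v \<in> \<sigma>}. affine hull (insert x0 (pos ` \<sigma>)))"
  proof
    fix z assume "z \<in> ball (pos v) \<delta>"
    then obtain t where "t > 0" and "x0 + t *\<^sub>R (z - x0) \<in> X \<inter> ball (pos v) e"
      using \<delta> by blast
    then obtain \<sigma> where "\<sigma> \<in> K" "v \<in> \<sigma>" and "x0 + t *\<^sub>R (z - x0) \<in> convex hull (pos ` \<sigma>)"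
      using near_v by blast
    then have "x0 + t *\<^sub>R (z - x0) \<in> affine hull (insert x0 (pos ` \<sigma>))"
      by (meson convex_hull_subset_affine_hull hull_mono subset_insertI subsetD)
    from mem_affine_hull_insert_scaled[OF _ this] \<open>t > 0\<close>
    have "z \<in> affine hull (insert x0 (pos ` \<sigma>))" by simp
    then show "z \<in> (\<Union>\<sigma>\<in>{\<sigma>\<in>K. v \<in> \<sigma>}. affine hull (insert x0 (pos ` \<sigma>)))"
      using \<open>\<sigma> \<in> K\<close> \<open>v \<in> \<sigma>\<close> by blast
  qed
  moreover have "negligible (\<Union>\<sigma>\<in>{\<sigma>\<in>K. v \<in> \<sigma>}. affine hull (insert x0 (pos ` \<sigma>)))"
    using \<open>finite K\<close> fin small dim by (intro negligible_cones_over_simplices) simp_all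
  ultimately have "negligible (ball (pos v) \<delta>)" by (rule negligible_subset[rotated])
  then show False using open_not_negligible[of "ball (pos v) \<delta>"] \<open>\<delta> > 0\<close> by simp
qed

theorem mainTheorem7:
  fixes n m :: nat and K :: "nat set set" and J :: "nat \<Rightarrow> nat"
    and p :: "(nat \<Rightarrow> nat) \<Rightarrow> nat \<Rightarrow> nat \<Rightarrow> 'r::comm_ring_1"
    and \<alpha> \<alpha>' :: "nat \<Rightarrow> nat" and v a b :: nat
  assumes "ring_Z_or_Z2 TYPE('r)"
    and "star_shaped_sphere TYPE('a::euclidean_space) n m K"
    and "\<forall>i\<in>{1..m}. 0 < J i"
    and "realizable_puzzle n m K J p"
    and "v \<in> {1..m}"
    and "\<alpha> \<in> IJ m J" and "\<alpha>' \<in> IJ m J"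
    and "\<alpha> v = a" and "\<alpha>' v = b" and "a \<noteq> b"
    and "\<forall>i. i \<noteq> v \<longrightarrow> \<alpha> i = \<alpha>' i"
    and "DJ_equiv n {1..m} (p \<alpha>) (p \<alpha>')"
  shows "\<forall>\<beta>\<in>IJ m J. \<beta> v = a \<longrightarrow> DJ_equiv n {1..m} (p \<beta>) (p (\<beta>(v := b)))"
proof -
  obtain Lam :: "nat \<times> nat \<Rightarrow> nat \<Rightarrow> 'r" where
    rep: "\<forall>\<gamma>\<in>IJ m J. proj_rep (NJ n m J) Lam (sigmaJ m J \<gamma>) n (\<lambda>i. (i, \<gamma> i)) {1..m} (p \<gamma>)"
    and "puzzle n m K J p"
    using assms(4) unfolding realizable_puzzle_def by blast
  obtain F where "F \<in> K" "v \<in> F" "card F = n"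
    using star_shaped_sphere_vertex_in_facet[OF assms(2,5)] by blast
  have "DIM('a) = n"
    using assms(2) unfolding star_shaped_sphere_def by blast
  then have "finite F"
    using \<open>card F = n\<close> DIM_positive[where 'a = 'a] card_ge_0_finite by metis
  have "char_map n K (p \<alpha>')"
    using \<open>puzzle n m K J p\<close> assms(7) unfolding puzzle_def by blast
  then have "is_R_basis n F (p \<alpha>')"
    using \<open>F \<in> K\<close> \<open>card F = n\<close> unfolding char_map_def by blast
  then obtain \<phi> where "linear_form n \<phi>" "\<phi> (p \<alpha>' v) = 1"
    using is_R_basis_coordinate_form[OF _ \<open>finite F\<close> \<open>v \<in> F\<close>] by blast
  then obtain \<Psi> where \<Psi>: "linear_form (NJ n m J) \<Psi>"
    "\<forall>u\<in>VJ m J. \<Psi> (Lam u) = (if u = (v, a) then -1 else if u = (v, b) then 1 else 0)"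
    using trivial_edge_separating_form[OF assms(8-11) rep[rule_format, OF assms(6)]
        rep[rule_format, OF assms(7)] assms(12)] by blast
  have b: "1 \<le> b" "b \<le> J v" using assms(5,7,9) unfolding IJ_def by auto
  show ?thesis
  proof (intro ballI impI)
    fix \<beta> assume \<beta>: "\<beta> \<in> IJ m J" "\<beta> v = a"
    then have "\<beta>(v := b) \<in> IJ m J" using b assms(5) unfolding IJ_def by auto
    from parallel_edge_DJ_equiv[OF assms(5) \<beta> assms(10) b \<Psi> rep[rule_format, OF \<beta>(1)] rep[rule_format, OF this]]
    show "DJ_equiv n {1..m} (p \<beta>) (p (\<beta>(v := b)))" .
  qed
qed

end
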